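(* Let $\theta\in\mathbb R$. Let $h:[0,1]\to[0,1]$ be Lipschitz with $\min(\alpha,\beta)\le h\le\max(\alpha,\beta)$ and let $\nu^N_h$ be the Bernoulli product measure on $\Omega_N$ with $\nu^N_h(\eta_x=1)=h(\frac xN)$. There exists $C>0$, independent of $f$ and $N$, such that for every density $f$ with respect to $\nu^N_h$, $$\int (L_N^\ell\sqrt f)\sqrt f\,d\nu^N_h\le-\frac14D_N^\ell(\sqrt f,\nu^N_h)+\frac{C\kappa}{N^\theta}\sum_{x\in\Lambda_N}r_N^-(\tfrac xN)\big(h(\tfrac xN)-\alpha\big)^2,$$ $$\int (L_N^r\sqrt f)\sqrt f\,d\nu^N_h\le-\frac14D_N^r(\sqrt f,\nu^N_h)+\frac{C\kappa}{N^\theta}\sum_{x\in\Lambda_N}r_N^+(\tfrac xN)\big(h(\tfrac xN)-\beta\big)^2.$$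
   Context: $p:\mathbb Z\to[0,1]$ is a symmetric transition probability with finite variance; $\alpha,\beta\in(0,1)$, $\kappa>0$. $\Lambda_N=\{1,\dots,N-1\}$, $\Omega_N=\{0,1\}^{\Lambda_N}$; $\sigma^x\eta$ flips the value at $x$; $c_x(\eta;a)=\eta_x(1-a)+(1-\eta_x)a$. $(L_N^\ell f)(\eta)=\frac{\kappa}{N^\theta}\sum_{x\in\Lambda_N,y\le0}p(x-y)c_x(\eta;\alpha)[f(\sigma^x\eta)-f(\eta)]$, $(L_N^rf)(\eta)=\frac{\kappa}{N^\theta}\sum_{x\in\Lambda_N,y\ge N}p(x-y)c_x(\eta;\beta)[f(\sigma^x\eta)-f(\eta)]$. $r_N^-(\frac xN)=\sum_{y\ge x}p(y)$, $r_N^+(\frac xN)=\sum_{y\le x-N}p(y)$. For a probability $\mu$ and density $f$: $I^a_x(\sqrt f,\mu)=\int c_x(\eta;a)(\sqrt{f(\sigma^x\eta)}-\sqrt{f(\eta)})^2d\mu$, $D_N^\ell(\sqrt f,\mu)=\frac{\kappa}{N^\theta}\sum_{x\in\Lambda_N}r_N^-(\frac xN)I^\alpha_x(\sqrt f,\mu)$, $D_N^r(\sqrt f,\mu)=\frac{\kappa}{N^\theta}\sum_{x\in\Lambda_N}r_N^+(\frac xN)I^\beta_x(\sqrt f,\mu)$. A density w.r.t. $\nu$ is $f\ge0$ with $\int f d\nu=1$. *)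

theory Defs
  imports "HOL-Analysis.Analysis"
begin

definition sym_trans_prob :: "(int \<Rightarrow> real) \<Rightarrow> bool" where
  "sym_trans_prob p \<longleftrightarrow> (\<forall>z. 0 \<le> p z \<and> p z \<le> 1) \<and> (p has_sum 1) UNIV
     \<and> (\<forall>z. p (- z) = p z) \<and> (\<lambda>z. (real_of_int z)^2 * p z) summable_on UNIV"

definition Lam :: "nat \<Rightarrow> int set" where
  "Lam N = {1 .. int N - 1}"

text \<open>Omega_N = {0,1}^Lambda_N; a configuration is a boolean function on int vanishing off Lambda_N.\<close>
definition Omega :: "nat \<Rightarrow> (int \<Rightarrow> bool) set" where
  "Omega N = {\<eta>. \<forall>x. x \<notin> Lam N \<longrightarrow> \<not> \<eta> x}"

definition flip :: "int \<Rightarrow> (int \<Rightarrow> bool) \<Rightarrow> (int \<Rightarrow> bool)" where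
  "flip x \<eta> = \<eta>(x := \<not> \<eta> x)"

definition crate :: "int \<Rightarrow> (int \<Rightarrow> bool) \<Rightarrow> real \<Rightarrow> real" where
  "crate x \<eta> a = (if \<eta> x then 1 - a else a)"

definition L_left :: "(int \<Rightarrow> real) \<Rightarrow> real \<Rightarrow> real \<Rightarrow> real \<Rightarrow> nat
     \<Rightarrow> ((int \<Rightarrow> bool) \<Rightarrow> real) \<Rightarrow> (int \<Rightarrow> bool) \<Rightarrow> real" where
  "L_left p \<kappa> \<theta> \<alpha> N f \<eta> = \<kappa> / (real N powr \<theta>) *
     (\<Sum>x\<in>Lam N. \<Sum>\<^sub>\<infinity>y\<in>{..0}. p (x - y) * crate x \<eta> \<alpha> * (f (flip x \<eta>) - f \<eta>))"

definition L_right :: "(int \<Rightarrow> real) \<Rightarrow> real \<Rightarrow> real \<Rightarrow> real \<Rightarrow> nat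
     \<Rightarrow> ((int \<Rightarrow> bool) \<Rightarrow> real) \<Rightarrow> (int \<Rightarrow> bool) \<Rightarrow> real" where
  "L_right p \<kappa> \<theta> \<beta> N f \<eta> = \<kappa> / (real N powr \<theta>) *
     (\<Sum>x\<in>Lam N. \<Sum>\<^sub>\<infinity>y\<in>{int N..}. p (x - y) * crate x \<eta> \<beta> * (f (flip x \<eta>) - f \<eta>))"

text \<open>r_N^-(x/N) = sum_{y >= x} p(y),  r_N^+(x/N) = sum_{y <= x - N} p(y).\<close>
definition r_minus :: "(int \<Rightarrow> real) \<Rightarrow> nat \<Rightarrow> int \<Rightarrow> real" where
  "r_minus p N x = (\<Sum>\<^sub>\<infinity>y\<in>{x..}. p y)"

definition r_plus :: "(int \<Rightarrow> real) \<Rightarrow> nat \<Rightarrow> int \<Rightarrow> real" where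
  "r_plus p N x = (\<Sum>\<^sub>\<infinity>y\<in>{..x - int N}. p y)"

text \<open>Bernoulli product measure nu^N_h with nu(eta_x = 1) = h(x/N), as point masses on Omega_N.\<close>
definition nu :: "(real \<Rightarrow> real) \<Rightarrow> nat \<Rightarrow> (int \<Rightarrow> bool) \<Rightarrow> real" where
  "nu h N \<eta> = (\<Prod>x\<in>Lam N. if \<eta> x then h (real_of_int x / real N) else 1 - h (real_of_int x / real N))"

definition integ :: "(real \<Rightarrow> real) \<Rightarrow> nat \<Rightarrow> ((int \<Rightarrow> bool) \<Rightarrow> real) \<Rightarrow> real" where
  "integ h N g = (\<Sum>\<eta>\<in>Omega N. nu h N \<eta> * g \<eta>)"

definition is_density :: "(real \<Rightarrow> real) \<Rightarrow> nat \<Rightarrow> ((int \<Rightarrow> bool) \<Rightarrow> real) \<Rightarrow> bool" where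
  "is_density h N f \<longleftrightarrow> (\<forall>\<eta>\<in>Omega N. 0 \<le> f \<eta>) \<and> integ h N f = 1"

definition Ix :: "(real \<Rightarrow> real) \<Rightarrow> nat \<Rightarrow> real \<Rightarrow> int \<Rightarrow> ((int \<Rightarrow> bool) \<Rightarrow> real) \<Rightarrow> real" where
  "Ix h N a x g = integ h N (\<lambda>\<eta>. crate x \<eta> a * (g (flip x \<eta>) - g \<eta>)^2)"

definition D_left :: "(int \<Rightarrow> real) \<Rightarrow> real \<Rightarrow> real \<Rightarrow> real \<Rightarrow> (real \<Rightarrow> real) \<Rightarrow> nat
     \<Rightarrow> ((int \<Rightarrow> bool) \<Rightarrow> real) \<Rightarrow> real" where
  "D_left p \<kappa> \<theta> \<alpha> h N g = \<kappa> / (real N powr \<theta>) * (\<Sum>x\<in>Lam N. r_minus p N x * Ix h N \<alpha> x g)"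

definition D_right :: "(int \<Rightarrow> real) \<Rightarrow> real \<Rightarrow> real \<Rightarrow> real \<Rightarrow> (real \<Rightarrow> real) \<Rightarrow> nat
     \<Rightarrow> ((int \<Rightarrow> bool) \<Rightarrow> real) \<Rightarrow> real" where
  "D_right p \<kappa> \<theta> \<beta> h N g = \<kappa> / (real N powr \<theta>) * (\<Sum>x\<in>Lam N. r_plus p N x * Ix h N \<beta> x g)"

end

theory Submission
  imports Defs
begin

text \<open>
  Pair each configuration with its flip at site x. On such a pair the contribution of site x to
  the quadratic form of the boundary generator is a quadratic form in the two values of
  \<open>sqrt f\<close>; completing the square against the Dirichlet term, with Young's inequality for the
  cross term, leaves an error proportional to \<open>(\<rho> - a)\<^sup>2\<close> times the local mass of f, where \<open>\<rho>\<close>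
  is the density of the reference measure at x. Since all densities lie in
  \<open>[\<delta>, 1 - \<delta>]\<close> for some \<open>\<delta> > 0\<close>, the constant is \<open>C = 1 / (2 \<delta>\<^sup>2)\<close>, and summing the
  site estimates against the weights \<open>r\<^sub>N\<^sup>\<plusminus>\<close> uses only \<open>\<integral> f d\<nu> = 1\<close>.
\<close>

lemma two_state_form_bound:
  fixes \<delta> \<rho> a u v :: real
  assumes "0 < \<delta>" "\<delta> \<le> \<rho>" "\<rho> \<le> 1 - \<delta>" "\<delta> \<le> a" "a \<le> 1 - \<delta>"
  shows "\<rho> * (1 - a) * (v - u) * u + (1 - \<rho>) * a * (u - v) * v
    \<le> - (1/4) * (\<rho> * (1 - a) + (1 - \<rho>) * a) * (u - v)\<^sup>2
      + (\<rho> - a)\<^sup>2 / (2 * \<delta>\<^sup>2) * (\<rho> * u\<^sup>2 + (1 - \<rho>) * v\<^sup>2)"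
proof -
  define c where "c = \<rho> * (1 - a) + (1 - \<rho>) * a"
  define d where "d = u - v"
  define s where "s = u + v"
  have lhs: "\<rho> * (1 - a) * (v - u) * u + (1 - \<rho>) * a * (u - v) * v
      = - c / 2 * d\<^sup>2 + (a - \<rho>) / 2 * d * s"
    unfolding c_def d_def s_def by (simp add: field_simps power2_eq_square)
  have c_ge: "\<delta> \<le> c"
  proof -
    have "c - \<delta> = \<rho> * ((1 - a) - \<delta>) + (1 - \<rho>) * (a - \<delta>)"
      unfolding c_def by (simp add: algebra_simps)
    also have "\<dots> \<ge> 0" using assms by (intro add_nonneg_nonneg mult_nonneg_nonneg) auto
    finally show ?thesis by simp
  qed
  have mass_ge: "\<delta> / 2 * s\<^sup>2 \<le> \<rho> * u\<^sup>2 + (1 - \<rho>) * v\<^sup>2"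
  proof -
    have "s\<^sup>2 \<le> 2 * (u\<^sup>2 + v\<^sup>2)"
      unfolding s_def using sum_squares_ge_zero[of "u - v" 0]
      by (simp add: power2_eq_square algebra_simps)
    then have "\<delta> / 2 * s\<^sup>2 \<le> \<delta> / 2 * (2 * (u\<^sup>2 + v\<^sup>2))"
      using assms(1) by (intro mult_left_mono) auto
    also have "\<dots> = \<delta> * u\<^sup>2 + \<delta> * v\<^sup>2" by (simp add: algebra_simps)
    also have "\<dots> \<le> \<rho> * u\<^sup>2 + (1 - \<rho>) * v\<^sup>2"
      using assms by (intro add_mono mult_right_mono) auto
    finally show ?thesis .
  qed
  have young: "(a - \<rho>) / 2 * d * s \<le> \<delta> / 4 * d\<^sup>2 + (\<rho> - a)\<^sup>2 / (4 * \<delta>) * s\<^sup>2"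
  proof -
    have "(\<delta> / 4 * d\<^sup>2 + (\<rho> - a)\<^sup>2 / (4 * \<delta>) * s\<^sup>2 - (a - \<rho>) / 2 * d * s) * (4 * \<delta>)
        = (\<delta> * d - (a - \<rho>) * s)\<^sup>2"
      using assms(1) by (simp add: field_simps power2_eq_square)
    then have "0 \<le> (\<delta> / 4 * d\<^sup>2 + (\<rho> - a)\<^sup>2 / (4 * \<delta>) * s\<^sup>2 - (a - \<rho>) / 2 * d * s) * (4 * \<delta>)"
      by simp
    then show ?thesis using assms(1) by (simp add: zero_le_mult_iff)
  qed
  have "(\<rho> - a)\<^sup>2 / (4 * \<delta>) * s\<^sup>2 = (\<rho> - a)\<^sup>2 / (2 * \<delta>\<^sup>2) * (\<delta> / 2 * s\<^sup>2)"
    using assms(1) by (simp add: field_simps power2_eq_square)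
  also have "\<dots> \<le> (\<rho> - a)\<^sup>2 / (2 * \<delta>\<^sup>2) * (\<rho> * u\<^sup>2 + (1 - \<rho>) * v\<^sup>2)"
    using mass_ge by (intro mult_left_mono) auto
  finally have error: "(\<rho> - a)\<^sup>2 / (4 * \<delta>) * s\<^sup>2 \<le> (\<rho> - a)\<^sup>2 / (2 * \<delta>\<^sup>2) * (\<rho> * u\<^sup>2 + (1 - \<rho>) * v\<^sup>2)" .
  have "\<delta> / 4 * d\<^sup>2 \<le> c / 4 * d\<^sup>2" using c_ge by (simp add: mult_right_mono)
  moreover have "- (1/4) * (\<rho> * (1 - a) + (1 - \<rho>) * a) * (u - v)\<^sup>2 = - (1/4) * c * d\<^sup>2"
    unfolding c_def d_def by simp
  ultimately show ?thesis using lhs young error by linarith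
qed

lemma flip_flip [simp]: "flip x (flip x \<eta>) = \<eta>"
  unfolding flip_def by auto

lemma flip_at [simp]: "flip x \<eta> x = (\<not> \<eta> x)"
  unfolding flip_def by simp

lemma flip_in_Omega: "x \<in> Lam N \<Longrightarrow> \<eta> \<in> Omega N \<Longrightarrow> flip x \<eta> \<in> Omega N"
  unfolding flip_def Omega_def by auto

lemma finite_Lam [simp]: "finite (Lam N)"
  unfolding Lam_def by simp

lemma sum_Omega_flip:
  assumes "x \<in> Lam N"
  shows "(\<Sum>\<eta>\<in>Omega N. F (flip x \<eta>)) = (\<Sum>\<eta>\<in>Omega N. F \<eta>)"
  by (rule sum.reindex_bij_witness[of _ "flip x" "flip x"]) (auto simp: flip_in_Omega[OF assms])

lemma sum_Omega_le_by_flip_pairs: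
  fixes F G :: "(int \<Rightarrow> bool) \<Rightarrow> real"
  assumes x: "x \<in> Lam N"
    and pairs: "\<And>\<eta>. \<eta> \<in> Omega N \<Longrightarrow> \<eta> x \<Longrightarrow> F \<eta> + F (flip x \<eta>) \<le> G \<eta> + G (flip x \<eta>)"
  shows "(\<Sum>\<eta>\<in>Omega N. F \<eta>) \<le> (\<Sum>\<eta>\<in>Omega N. G \<eta>)"
proof -
  have all_pairs: "F \<eta> + F (flip x \<eta>) \<le> G \<eta> + G (flip x \<eta>)" if "\<eta> \<in> Omega N" for \<eta>
  proof (cases "\<eta> x")
    case False
    then show ?thesis
      using pairs[of "flip x \<eta>"] flip_in_Omega[OF x that] by (simp add: add.commute)
  qed (use pairs that in auto)
  have "2 * (\<Sum>\<eta>\<in>Omega N. F \<eta>) = (\<Sum>\<eta>\<in>Omega N. F \<eta> + F (flip x \<eta>))"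
    by (simp add: sum.distrib sum_Omega_flip[OF x])
  also have "\<dots> \<le> (\<Sum>\<eta>\<in>Omega N. G \<eta> + G (flip x \<eta>))"
    using all_pairs by (rule sum_mono)
  also have "\<dots> = 2 * (\<Sum>\<eta>\<in>Omega N. G \<eta>)"
    by (simp add: sum.distrib sum_Omega_flip[OF x])
  finally show ?thesis by simp
qed

lemma nu_flip_pair:
  assumes x: "x \<in> Lam N" and \<eta>x: "\<eta> x"
    and h01: "\<forall>y\<in>Lam N. 0 \<le> h (real_of_int y / real N) \<and> h (real_of_int y / real N) \<le> 1"
  obtains P where "0 \<le> P"
    and "nu h N \<eta> = h (real_of_int x / real N) * P"
    and "nu h N (flip x \<eta>) = (1 - h (real_of_int x / real N)) * P"
proof
  let ?site = "\<lambda>\<zeta> y. if \<zeta> y then h (real_of_int y / real N) else 1 - h (real_of_int y / real N)"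
  define P where "P = (\<Prod>y\<in>Lam N - {x}. ?site \<eta> y)"
  show "0 \<le> P" unfolding P_def using h01 by (intro prod_nonneg) auto
  have split: "nu h N \<zeta> = ?site \<zeta> x * (\<Prod>y\<in>Lam N - {x}. ?site \<zeta> y)" for \<zeta>
    unfolding nu_def using x by (simp add: prod.remove)
  have "(\<Prod>y\<in>Lam N - {x}. ?site (flip x \<eta>) y) = P"
    unfolding P_def by (rule prod.cong) (auto simp: flip_def)
  then show "nu h N \<eta> = h (real_of_int x / real N) * P"
    and "nu h N (flip x \<eta>) = (1 - h (real_of_int x / real N)) * P"
    using \<eta>x by (simp_all add: split P_def)
qed

lemma integ_site_bound:
  fixes x :: int and a \<delta> :: real
  assumes x: "x \<in> Lam N" and f_nonneg: "\<forall>\<eta>\<in>Omega N. 0 \<le> f \<eta>"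
    and \<delta>: "0 < \<delta>" "\<delta> \<le> a" "a \<le> 1 - \<delta>"
    and h_bounds: "\<forall>y\<in>Lam N. \<delta> \<le> h (real_of_int y / real N) \<and> h (real_of_int y / real N) \<le> 1 - \<delta>"
  shows "integ h N (\<lambda>\<eta>. crate x \<eta> a * (sqrt (f (flip x \<eta>)) - sqrt (f \<eta>)) * sqrt (f \<eta>))
    \<le> - (1/4) * Ix h N a x (\<lambda>\<zeta>. sqrt (f \<zeta>))
      + (h (real_of_int x / real N) - a)\<^sup>2 / (2 * \<delta>\<^sup>2) * integ h N f"
proof -
  define g where "g = (\<lambda>\<zeta>. sqrt (f \<zeta>))"
  define \<rho> where "\<rho> = h (real_of_int x / real N)"
  define K where "K = (\<rho> - a)\<^sup>2 / (2 * \<delta>\<^sup>2)"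
  define F where "F = (\<lambda>\<eta>. nu h N \<eta> * (crate x \<eta> a * (g (flip x \<eta>) - g \<eta>) * g \<eta>))"
  define G where "G = (\<lambda>\<eta>. nu h N \<eta> * (- (1/4) * (crate x \<eta> a * (g (flip x \<eta>) - g \<eta>)\<^sup>2) + K * f \<eta>))"
  have h01: "\<forall>y\<in>Lam N. 0 \<le> h (real_of_int y / real N) \<and> h (real_of_int y / real N) \<le> 1"
    using h_bounds \<delta>(1) by force
  have \<rho>: "\<delta> \<le> \<rho>" "\<rho> \<le> 1 - \<delta>" using h_bounds x unfolding \<rho>_def by auto
  have f_sq: "f \<zeta> = (g \<zeta>)\<^sup>2" if "\<zeta> \<in> Omega N" for \<zeta>
    unfolding g_def using f_nonneg that by simp
  have "(\<Sum>\<eta>\<in>Omega N. F \<eta>) \<le> (\<Sum>\<eta>\<in>Omega N. G \<eta>)"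
  proof (rule sum_Omega_le_by_flip_pairs[OF x])
    fix \<eta> assume \<eta>: "\<eta> \<in> Omega N" and \<eta>x: "\<eta> x"
    obtain P where P: "0 \<le> P" "nu h N \<eta> = \<rho> * P" "nu h N (flip x \<eta>) = (1 - \<rho>) * P"
      using nu_flip_pair[where h = h and \<eta> = \<eta>, OF x \<eta>x h01] unfolding \<rho>_def by metis
    let ?u = "g \<eta>" and ?v = "g (flip x \<eta>)"
    have "F \<eta> + F (flip x \<eta>) = P * (\<rho> * (1 - a) * (?v - ?u) * ?u + (1 - \<rho>) * a * (?u - ?v) * ?v)"
      unfolding F_def P using \<eta>x by (simp add: crate_def algebra_simps)
    also have "\<dots> \<le> P * (- (1/4) * (\<rho> * (1 - a) + (1 - \<rho>) * a) * (?u - ?v)\<^sup>2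
        + K * (\<rho> * ?u\<^sup>2 + (1 - \<rho>) * ?v\<^sup>2))"
      unfolding K_def using two_state_form_bound[OF \<delta>(1) \<rho> \<delta>(2,3)] P(1) by (rule mult_left_mono)
    also have "\<dots> = G \<eta> + G (flip x \<eta>)"
      unfolding G_def P using \<eta>x f_sq[OF \<eta>] f_sq[OF flip_in_Omega[OF x \<eta>]]
      by (simp add: crate_def field_simps power2_commute)
    finally show "F \<eta> + F (flip x \<eta>) \<le> G \<eta> + G (flip x \<eta>)" .
  qed
  also have "(\<Sum>\<eta>\<in>Omega N. G \<eta>) = (\<Sum>\<eta>\<in>Omega N.
      - (1/4) * (nu h N \<eta> * (crate x \<eta> a * (g (flip x \<eta>) - g \<eta>)\<^sup>2)) + K * (nu h N \<eta> * f \<eta>))"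
    unfolding G_def by (simp add: algebra_simps)
  also have "\<dots> = - (1/4) * Ix h N a x g + K * integ h N f"
    unfolding Ix_def integ_def by (simp only: sum.distrib sum_distrib_left)
  finally show ?thesis unfolding F_def integ_def K_def g_def \<rho>_def by (simp add: mult.assoc)
qed

lemma integ_weighted_sites_bound:
  fixes a \<delta> :: real and w :: "int \<Rightarrow> real"
  assumes w: "\<forall>x\<in>Lam N. 0 \<le> w x"
    and f_nonneg: "\<forall>\<eta>\<in>Omega N. 0 \<le> f \<eta>" and f_mass: "integ h N f = 1"
    and \<delta>: "0 < \<delta>" "\<delta> \<le> a" "a \<le> 1 - \<delta>"
    and h_bounds: "\<forall>y\<in>Lam N. \<delta> \<le> h (real_of_int y / real N) \<and> h (real_of_int y / real N) \<le> 1 - \<delta>"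
  shows "integ h N (\<lambda>\<eta>. (\<Sum>x\<in>Lam N. w x * (crate x \<eta> a * (sqrt (f (flip x \<eta>)) - sqrt (f \<eta>))))
      * sqrt (f \<eta>))
    \<le> - (1/4) * (\<Sum>x\<in>Lam N. w x * Ix h N a x (\<lambda>\<zeta>. sqrt (f \<zeta>)))
      + 1 / (2 * \<delta>\<^sup>2) * (\<Sum>x\<in>Lam N. w x * (h (real_of_int x / real N) - a)\<^sup>2)"
proof -
  define g where "g = (\<lambda>\<zeta>. sqrt (f \<zeta>))"
  define T where "T = (\<lambda>x \<eta>. crate x \<eta> a * (g (flip x \<eta>) - g \<eta>) * g \<eta>)"
  have "integ h N (\<lambda>\<eta>. (\<Sum>x\<in>Lam N. w x * (crate x \<eta> a * (g (flip x \<eta>) - g \<eta>))) * g \<eta>)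
      = (\<Sum>\<eta>\<in>Omega N. \<Sum>x\<in>Lam N. w x * (nu h N \<eta> * T x \<eta>))"
    unfolding integ_def T_def by (simp add: sum_distrib_left sum_distrib_right mult_ac)
  also have "\<dots> = (\<Sum>x\<in>Lam N. w x * integ h N (T x))"
    unfolding integ_def by (subst sum.swap) (simp add: sum_distrib_left)
  also have "\<dots> \<le> (\<Sum>x\<in>Lam N. w x * (- (1/4) * Ix h N a x g
      + (h (real_of_int x / real N) - a)\<^sup>2 / (2 * \<delta>\<^sup>2) * integ h N f))"
    unfolding T_def g_def
    using integ_site_bound[OF _ f_nonneg \<delta> h_bounds] w by (intro sum_mono mult_left_mono) auto
  also have "\<dots> = - (1/4) * (\<Sum>x\<in>Lam N. w x * Ix h N a x g)
      + 1 / (2 * \<delta>\<^sup>2) * (\<Sum>x\<in>Lam N. w x * (h (real_of_int x / real N) - a)\<^sup>2)"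
    unfolding f_mass by (simp add: sum.distrib sum_distrib_left sum_subtractf sum_negf algebra_simps)
  finally show ?thesis unfolding g_def .
qed

lemma infsum_reflect:
  fixes p :: "int \<Rightarrow> real"
  shows "(\<Sum>\<^sub>\<infinity>y\<in>A. p (x - y)) = (\<Sum>\<^sub>\<infinity>z\<in>{z. x - z \<in> A}. p z)"
  by (rule infsum_reindex_bij_witness[of _ "\<lambda>z. x - z" "\<lambda>y. x - y"]) auto

lemma L_left_eq:
  "L_left p \<kappa> \<theta> \<alpha> N g \<eta> = \<kappa> / real N powr \<theta> *
     (\<Sum>x\<in>Lam N. r_minus p N x * (crate x \<eta> \<alpha> * (g (flip x \<eta>) - g \<eta>)))"
proof -
  have "(\<Sum>\<^sub>\<infinity>y\<in>{..0}. p (x - y) * c) = r_minus p N x * c" for x and c :: real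
    using infsum_reflect[of p x "{..0}"]
    by (simp add: infsum_cmult_left' r_minus_def atLeast_def)
  then show ?thesis unfolding L_left_def by (simp add: mult.assoc)
qed

lemma L_right_eq:
  "L_right p \<kappa> \<theta> \<beta> N g \<eta> = \<kappa> / real N powr \<theta> *
     (\<Sum>x\<in>Lam N. r_plus p N x * (crate x \<eta> \<beta> * (g (flip x \<eta>) - g \<eta>)))"
proof -
  have "{z. x - z \<in> {int N..}} = {..x - int N}" for x by auto
  then have "(\<Sum>\<^sub>\<infinity>y\<in>{int N..}. p (x - y) * c) = r_plus p N x * c" for x and c :: real
    using infsum_reflect[of p x "{int N..}"] by (simp add: infsum_cmult_left' r_plus_def)
  then show ?thesis unfolding L_right_def by (simp add: mult.assoc)
qed

lemma integ_cmult: "integ h N (\<lambda>\<eta>. c * F \<eta>) = c * integ h N F"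
  unfolding integ_def by (simp add: sum_distrib_left mult_ac)

lemma r_minus_nonneg: "(\<And>z. 0 \<le> p z) \<Longrightarrow> 0 \<le> r_minus p N x"
  unfolding r_minus_def by (simp add: infsum_nonneg)

lemma r_plus_nonneg: "(\<And>z. 0 \<le> p z) \<Longrightarrow> 0 \<le> r_plus p N x"
  unfolding r_plus_def by (simp add: infsum_nonneg)

lemma L_left_form_bound:
  assumes p_nonneg: "\<And>z. 0 \<le> p z" and \<kappa>: "0 \<le> \<kappa>" and f: "is_density h N f"
    and \<delta>: "0 < \<delta>" "\<delta> \<le> \<alpha>" "\<alpha> \<le> 1 - \<delta>"
    and h_bounds: "\<forall>y\<in>Lam N. \<delta> \<le> h (real_of_int y / real N) \<and> h (real_of_int y / real N) \<le> 1 - \<delta>"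
  shows "integ h N (\<lambda>\<eta>. L_left p \<kappa> \<theta> \<alpha> N (\<lambda>\<zeta>. sqrt (f \<zeta>)) \<eta> * sqrt (f \<eta>))
    \<le> - (1/4) * D_left p \<kappa> \<theta> \<alpha> h N (\<lambda>\<zeta>. sqrt (f \<zeta>))
      + 1 / (2 * \<delta>\<^sup>2) * \<kappa> / real N powr \<theta> *
        (\<Sum>x\<in>Lam N. r_minus p N x * (h (real_of_int x / real N) - \<alpha>)\<^sup>2)"
proof -
  have "\<forall>x\<in>Lam N. 0 \<le> r_minus p N x" by (simp add: r_minus_nonneg p_nonneg)
  from integ_weighted_sites_bound[OF this _ _ \<delta> h_bounds] f
  have "\<kappa> / real N powr \<theta> * integ h N (\<lambda>\<eta>. (\<Sum>x\<in>Lam N. r_minus p N x *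
        (crate x \<eta> \<alpha> * (sqrt (f (flip x \<eta>)) - sqrt (f \<eta>)))) * sqrt (f \<eta>))
      \<le> \<kappa> / real N powr \<theta> * (- (1/4) * (\<Sum>x\<in>Lam N. r_minus p N x * Ix h N \<alpha> x (\<lambda>\<zeta>. sqrt (f \<zeta>)))
        + 1 / (2 * \<delta>\<^sup>2) * (\<Sum>x\<in>Lam N. r_minus p N x * (h (real_of_int x / real N) - \<alpha>)\<^sup>2))"
    using \<kappa> by (intro mult_left_mono) (auto simp: is_density_def)
  then show ?thesis
    unfolding L_left_eq D_left_def mult.assoc[of "\<kappa> / _"] integ_cmult by (simp add: algebra_simps)
qed

lemma L_right_form_bound:
  assumes p_nonneg: "\<And>z. 0 \<le> p z" and \<kappa>: "0 \<le> \<kappa>" and f: "is_density h N f"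
    and \<delta>: "0 < \<delta>" "\<delta> \<le> \<beta>" "\<beta> \<le> 1 - \<delta>"
    and h_bounds: "\<forall>y\<in>Lam N. \<delta> \<le> h (real_of_int y / real N) \<and> h (real_of_int y / real N) \<le> 1 - \<delta>"
  shows "integ h N (\<lambda>\<eta>. L_right p \<kappa> \<theta> \<beta> N (\<lambda>\<zeta>. sqrt (f \<zeta>)) \<eta> * sqrt (f \<eta>))
    \<le> - (1/4) * D_right p \<kappa> \<theta> \<beta> h N (\<lambda>\<zeta>. sqrt (f \<zeta>))
      + 1 / (2 * \<delta>\<^sup>2) * \<kappa> / real N powr \<theta> *
        (\<Sum>x\<in>Lam N. r_plus p N x * (h (real_of_int x / real N) - \<beta>)\<^sup>2)"
proof -
  have "\<forall>x\<in>Lam N. 0 \<le> r_plus p N x" by (simp add: r_plus_nonneg p_nonneg)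
  from integ_weighted_sites_bound[OF this _ _ \<delta> h_bounds] f
  have "\<kappa> / real N powr \<theta> * integ h N (\<lambda>\<eta>. (\<Sum>x\<in>Lam N. r_plus p N x *
        (crate x \<eta> \<beta> * (sqrt (f (flip x \<eta>)) - sqrt (f \<eta>)))) * sqrt (f \<eta>))
      \<le> \<kappa> / real N powr \<theta> * (- (1/4) * (\<Sum>x\<in>Lam N. r_plus p N x * Ix h N \<beta> x (\<lambda>\<zeta>. sqrt (f \<zeta>)))
        + 1 / (2 * \<delta>\<^sup>2) * (\<Sum>x\<in>Lam N. r_plus p N x * (h (real_of_int x / real N) - \<beta>)\<^sup>2))"
    using \<kappa> by (intro mult_left_mono) (auto simp: is_density_def)
  then show ?thesis
    unfolding L_right_eq D_right_def mult.assoc[of "\<kappa> / _"] integ_cmult by (simp add: algebra_simps)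
qed

lemma Lam_scaled_in_unit: "x \<in> Lam N \<Longrightarrow> real_of_int x / real N \<in> {0..1}"
  unfolding Lam_def by (auto simp: field_simps)

theorem corollary5p4:
  fixes p :: "int \<Rightarrow> real" and \<alpha> \<beta> \<kappa> \<theta> :: real and h :: "real \<Rightarrow> real"
  assumes hp: "sym_trans_prob p"
    and h\<alpha>: "0 < \<alpha>" "\<alpha> < 1" and h\<beta>: "0 < \<beta>" "\<beta> < 1" and h\<kappa>: "0 < \<kappa>"
    and hLip: "\<exists>L. L-lipschitz_on {0..1} h"
    and hrange: "\<forall>u\<in>{0..1}. 0 \<le> h u \<and> h u \<le> 1"
    and hbounds: "\<forall>u\<in>{0..1}. min \<alpha> \<beta> \<le> h u \<and> h u \<le> max \<alpha> \<beta>"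
  shows "\<exists>C>0. \<forall>N::nat. \<forall>f. N \<ge> 1 \<longrightarrow> is_density h N f \<longrightarrow>
     integ h N (\<lambda>\<eta>. L_left p \<kappa> \<theta> \<alpha> N (\<lambda>\<zeta>. sqrt (f \<zeta>)) \<eta> * sqrt (f \<eta>))
       \<le> - (1/4) * D_left p \<kappa> \<theta> \<alpha> h N (\<lambda>\<zeta>. sqrt (f \<zeta>))
         + C * \<kappa> / (real N powr \<theta>) *
           (\<Sum>x\<in>Lam N. r_minus p N x * (h (real_of_int x / real N) - \<alpha>)^2)
   \<and> integ h N (\<lambda>\<eta>. L_right p \<kappa> \<theta> \<beta> N (\<lambda>\<zeta>. sqrt (f \<zeta>)) \<eta> * sqrt (f \<eta>))
       \<le> - (1/4) * D_right p \<kappa> \<theta> \<beta> h N (\<lambda>\<zeta>. sqrt (f \<zeta>))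
         + C * \<kappa> / (real N powr \<theta>) *
           (\<Sum>x\<in>Lam N. r_plus p N x * (h (real_of_int x / real N) - \<beta>)^2)"
proof -
  define \<delta> where "\<delta> = min (min \<alpha> (1 - \<alpha>)) (min \<beta> (1 - \<beta>))"
  have \<delta>: "0 < \<delta>" "\<delta> \<le> \<alpha>" "\<alpha> \<le> 1 - \<delta>" "\<delta> \<le> \<beta>" "\<beta> \<le> 1 - \<delta>"
    unfolding \<delta>_def using h\<alpha> h\<beta> by auto
  have p_nonneg: "0 \<le> p z" for z
    using hp unfolding sym_trans_prob_def by simp
  have h_bounds: "\<forall>y\<in>Lam N. \<delta> \<le> h (real_of_int y / real N) \<and> h (real_of_int y / real N) \<le> 1 - \<delta>" for N
  proof
    fix y assume "y \<in> Lam N"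
    then have "min \<alpha> \<beta> \<le> h (real_of_int y / real N) \<and> h (real_of_int y / real N) \<le> max \<alpha> \<beta>"
      using hbounds Lam_scaled_in_unit by blast
    then show "\<delta> \<le> h (real_of_int y / real N) \<and> h (real_of_int y / real N) \<le> 1 - \<delta>"
      using \<delta>(2-5) by (auto simp: min_def max_def split: if_splits)
  qed
  show ?thesis
    using L_left_form_bound[OF p_nonneg _ _ \<delta>(1-3) h_bounds]
      L_right_form_bound[OF p_nonneg _ _ \<delta>(1,4,5) h_bounds] h\<kappa> \<delta>(1)
    by (intro exI[of _ "1 / (2 * \<delta>\<^sup>2)"]) auto
qed

end
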